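(* Let $0<c\le1$ and let $$X=\Big\{\sum_{i,j\in\mathbb Z}|\lambda_{i,j}-\lambda_{i,j+1}|^2 \ :\ \lambda_{i,j}\in\mathbb C,\ \sum_{i,j\in\mathbb Z}|\lambda_{i,j}|^2\le1,\ \sum_{i\in\mathbb Z}|\lambda_{i,0}|^2\ge c^2\Big\}\subset\mathbb R_{\ge0}.$$ Then $\frac{c^4}{3+18c^2}$ is a lower bound for $X$. *)

theory Defs
  imports "HOL-Analysis.Analysis"
begin

end

theory Submission
  imports Defs
begin

text \<open>
  For each row \<open>i\<close> the squares \<open>|\<lambda>(i,j)|\<^sup>2\<close> tend to \<open>0\<close> as \<open>j \<rightarrow> \<infinity>\<close> and as
  \<open>j \<rightarrow> -\<infinity>\<close>, so telescoping outwards from \<open>j = 0\<close> gives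
  \<open>2 |\<lambda>(i,0)|\<^sup>2 \<le> \<Sum>\<^sub>j \<bar>|\<lambda>(i,j)|\<^sup>2 - |\<lambda>(i,j+1)|\<^sup>2\<bar>\<close>. Each term is at most
  \<open>|\<lambda>(i,j) - \<lambda>(i,j+1)| (|\<lambda>(i,j)| + |\<lambda>(i,j+1)|)\<close>, which AM-GM with a weight \<open>t\<close> splits
  into \<open>t/2 |\<lambda>(i,j) - \<lambda>(i,j+1)|\<^sup>2 + (|\<lambda>(i,j)|\<^sup>2 + |\<lambda>(i,j+1)|\<^sup>2) / t\<close>. Summing over
  all \<open>i, j\<close> gives \<open>2 c\<^sup>2 \<le> t/2 D + 2/t\<close> for the sum \<open>D\<close> in question, and \<open>t = 2/c\<^sup>2\<close>
  yields \<open>D \<ge> c\<^sup>4\<close>: stronger than the claim, and without using \<open>c \<le> 1\<close>.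
\<close>

lemma abs_diff_norm_sq_le:
  fixes x y :: "'a::real_normed_vector" and t :: real
  assumes "t > 0"
  shows "\<bar>(norm x)\<^sup>2 - (norm y)\<^sup>2\<bar> \<le> t / 2 * (norm (x - y))\<^sup>2 + ((norm x)\<^sup>2 + (norm y)\<^sup>2) / t"
proof -
  let ?p = "norm x" and ?q = "norm y" and ?u = "norm (x - y)"
  have "?p\<^sup>2 - ?q\<^sup>2 = (?p - ?q) * (?p + ?q)"
    by (simp add: power2_eq_square algebra_simps)
  then have "\<bar>?p\<^sup>2 - ?q\<^sup>2\<bar> = \<bar>?p - ?q\<bar> * (?p + ?q)"
    by (simp add: abs_mult)
  also have "\<dots> \<le> ?u * (?p + ?q)"
    by (simp add: mult_right_mono norm_triangle_ineq3)
  also have "\<dots> \<le> t / 2 * ?u\<^sup>2 + (?p + ?q)\<^sup>2 / (2 * t)"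
  proof -
    have "0 \<le> (t * ?u - (?p + ?q))\<^sup>2" by simp
    then show ?thesis using assms by (simp add: field_simps power2_eq_square)
  qed
  also have "\<dots> \<le> t / 2 * ?u\<^sup>2 + (?p\<^sup>2 + ?q\<^sup>2) / t"
  proof -
    have "(?p + ?q)\<^sup>2 \<le> 2 * (?p\<^sup>2 + ?q\<^sup>2)"
      using zero_le_power2[of "?p - ?q"] by (simp add: power2_eq_square algebra_simps)
    then have "(?p + ?q)\<^sup>2 / (2 * t) \<le> 2 * (?p\<^sup>2 + ?q\<^sup>2) / (2 * t)"
      using assms by (simp add: divide_right_mono)
    moreover have "2 * (?p\<^sup>2 + ?q\<^sup>2) / (2 * t) = (?p\<^sup>2 + ?q\<^sup>2) / t"
      by (rule mult_divide_mult_cancel_left) simp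
    ultimately show ?thesis by linarith
  qed
  finally show ?thesis .
qed

lemma norm_diff_sq_le:
  fixes x y :: "'a::real_normed_vector"
  shows "(norm (x - y))\<^sup>2 \<le> 2 * (norm x)\<^sup>2 + 2 * (norm y)\<^sup>2"
proof -
  have "(norm (x - y))\<^sup>2 \<le> (norm x + norm y)\<^sup>2"
    by (simp add: norm_triangle_ineq4 power_mono)
  also have "\<dots> \<le> 2 * (norm x)\<^sup>2 + 2 * (norm y)\<^sup>2"
    using zero_le_power2[of "norm x - norm y"] by (simp add: power2_eq_square algebra_simps)
  finally show ?thesis .
qed

lemma summable_on_comp_inj:
  fixes f :: "'a \<Rightarrow> 'b::banach"
  assumes "f summable_on UNIV" and "inj h"
  shows "(\<lambda>x. f (h x)) summable_on UNIV"
proof -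
  have "f summable_on range h"
    using assms(1) by (rule summable_on_subset_banach) simp
  then show ?thesis
    using summable_on_reindex[OF assms(2), of f] by (simp add: comp_def)
qed

lemma summable_on_LIMSEQ_zero:
  fixes f :: "'a \<Rightarrow> 'b::banach"
  assumes "f summable_on UNIV" and "inj g"
  shows "(\<lambda>n. f (g n)) \<longlonglongrightarrow> 0"
  using summable_on_comp_inj[OF assms]
  by (intro summable_LIMSEQ_zero summable_on_imp_summable)

lemma telescope_symmetric_le:
  fixes f :: "int \<Rightarrow> real"
  shows "2 * f 0 - f (int n) - f (- int n) \<le> (\<Sum>k = - int n..<int n. \<bar>f k - f (k + 1)\<bar>)"
proof (induction n)
  case (Suc n)
  have "{- int n - 1..<int n + 1} = insert (- int n - 1) (insert (int n) {- int n..<int n})"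
    by auto
  then have "(\<Sum>k = - int n - 1..<int n + 1. \<bar>f k - f (k + 1)\<bar>)
      = \<bar>f (- int n - 1) - f (- int n)\<bar> + \<bar>f (int n) - f (int n + 1)\<bar>
        + (\<Sum>k = - int n..<int n. \<bar>f k - f (k + 1)\<bar>)"
    by simp
  moreover have "f (- int n) - f (- int n - 1) \<le> \<bar>f (- int n - 1) - f (- int n)\<bar>"
    and "f (int n) - f (int n + 1) \<le> \<bar>f (int n) - f (int n + 1)\<bar>"
    by simp_all
  moreover have "int (Suc n) = int n + 1" "- int (Suc n) = - int n - 1"
    by simp_all
  ultimately show ?case using Suc.IH by (simp only:)
qed simp

lemma double_le_infsum_of_abs_diff_le:
  fixes f h :: "int \<Rightarrow> real"
  assumes "(\<lambda>n. f (int n)) \<longlonglongrightarrow> 0" and "(\<lambda>n. f (- int n)) \<longlonglongrightarrow> 0"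
    and "h summable_on UNIV" and "\<And>k. \<bar>f k - f (k + 1)\<bar> \<le> h k"
  shows "2 * f 0 \<le> infsum h UNIV"
proof (rule LIMSEQ_le_const2)
  show "(\<lambda>n. 2 * f 0 - f (int n) - f (- int n)) \<longlonglongrightarrow> 2 * f 0"
    using tendsto_diff[OF tendsto_diff[OF tendsto_const assms(1)] assms(2)] by simp
  have "2 * f 0 - f (int n) - f (- int n) \<le> infsum h UNIV" for n
  proof -
    have "2 * f 0 - f (int n) - f (- int n) \<le> (\<Sum>k = - int n..<int n. \<bar>f k - f (k + 1)\<bar>)"
      by (rule telescope_symmetric_le)
    also have "\<dots> \<le> sum h {- int n..<int n}"
      by (intro sum_mono assms(4))
    also have "\<dots> \<le> infsum h UNIV"
      using assms(3,4) by (intro finite_sum_le_infsum) (auto intro: order_trans[OF abs_ge_zero])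
    finally show ?thesis .
  qed
  then show "\<exists>N. \<forall>n\<ge>N. 2 * f 0 - f (int n) - f (- int n) \<le> infsum h UNIV" by blast
qed

lemma infsum_column_norm_sq_le:
  fixes l :: "'b \<times> int \<Rightarrow> 'a::real_normed_vector" and t :: real
  assumes "t > 0" and "(\<lambda>p. (norm (l p))\<^sup>2) summable_on UNIV"
  shows "2 * (\<Sum>\<^sub>\<infinity>i. (norm (l (i, 0)))\<^sup>2)
    \<le> t / 2 * (\<Sum>\<^sub>\<infinity>(i, j). (norm (l (i, j) - l (i, j + 1)))\<^sup>2) + 2 / t * (\<Sum>\<^sub>\<infinity>p. (norm (l p))\<^sup>2)"
proof -
  define a where "a p = (norm (l p))\<^sup>2" for p
  define d where "d = (\<lambda>(i, j). (norm (l (i, j) - l (i, j + 1)))\<^sup>2)"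
  define g where "g = (\<lambda>(i, j). t / 2 * d (i, j) + (a (i, j) + a (i, j + 1)) / t)"
  define S D where "S = infsum a UNIV" and "D = infsum d UNIV"
  have a: "(a has_sum S) UNIV"
    using assms(2) unfolding S_def a_def by (rule has_sum_infsum)
  have "bij_betw (\<lambda>(i, j). (i, j + 1)) UNIV (UNIV :: ('b \<times> int) set)"
    by (rule bij_betwI[where g = "\<lambda>(i, j). (i, j - 1)"]) auto
  then have a_up: "((\<lambda>(i, j). a (i, j + 1)) has_sum S) UNIV"
    using has_sum_reindex_bij_betw[of _ UNIV UNIV a S] a by (simp add: case_prod_beta')
  have "d summable_on UNIV"
  proof (rule summable_on_comparison_test)
    show "(\<lambda>(i, j). 2 * a (i, j) + 2 * a (i, j + 1)) summable_on UNIV"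
      using has_sum_add[OF has_sum_cmult_right[OF a] has_sum_cmult_right[OF a_up]]
      by (auto simp: summable_on_def case_prod_beta')
  qed (auto simp: d_def a_def norm_diff_sq_le)
  then have d: "(d has_sum D) UNIV"
    unfolding D_def by (rule has_sum_infsum)
  have g: "(g has_sum (t / 2 * D + (S + S) / t)) UNIV"
    using has_sum_add[OF has_sum_cmult_right[OF d, where c = "t / 2"]
      has_sum_divide_const[OF has_sum_add[OF a a_up], where c = t]]
    unfolding g_def by (simp add: case_prod_beta')
  have g_row: "(\<lambda>j. g (i, j)) summable_on UNIV" for i
    using summable_on_comp_inj[of g "Pair i"] g by (auto simp: summable_on_def inj_def)
  have row: "2 * a (i, 0) \<le> (\<Sum>\<^sub>\<infinity>j. g (i, j))" for i
  proof (rule double_le_infsum_of_abs_diff_le[OF _ _ g_row])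
    have "(\<lambda>j. a (i, j)) summable_on UNIV"
      using summable_on_comp_inj[of a "Pair i"] a by (auto simp: summable_on_def inj_def)
    then show "(\<lambda>n. a (i, int n)) \<longlonglongrightarrow> 0" "(\<lambda>n. a (i, - int n)) \<longlonglongrightarrow> 0"
      by (auto intro!: summable_on_LIMSEQ_zero[where f = "\<lambda>j. a (i, j)"] injI)
    show "\<bar>a (i, j) - a (i, j + 1)\<bar> \<le> g (i, j)" for j
      unfolding a_def g_def d_def using abs_diff_norm_sq_le[OF assms(1)] by simp
  qed
  have "((\<lambda>i. 2 * a (i, 0)) has_sum 2 * (\<Sum>\<^sub>\<infinity>i. a (i, 0))) UNIV"
    using summable_on_comp_inj[of a "\<lambda>i. (i, 0)"] a
    by (intro has_sum_cmult_right has_sum_infsum) (auto simp: summable_on_def inj_def)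
  moreover have "((\<lambda>i. \<Sum>\<^sub>\<infinity>j. g (i, j)) has_sum (t / 2 * D + (S + S) / t)) UNIV"
    by (rule has_sum_SigmaD[where B = "\<lambda>_. UNIV"]) (use g g_row in auto)
  ultimately have "2 * (\<Sum>\<^sub>\<infinity>i. a (i, 0)) \<le> t / 2 * D + (S + S) / t"
    by (rule has_sum_mono) (use row in simp)
  then show ?thesis
    unfolding a_def S_def D_def d_def by simp
qed

theorem lemma6p8:
  fixes c :: real and l :: "int \<times> int \<Rightarrow> complex"
  assumes "0 < c" and "c \<le> 1"
    and "(\<lambda>p. (cmod (l p))\<^sup>2) summable_on UNIV"
    and "(\<Sum>\<^sub>\<infinity>p. (cmod (l p))\<^sup>2) \<le> 1"
    and "(\<Sum>\<^sub>\<infinity>i. (cmod (l (i, 0)))\<^sup>2) \<ge> c\<^sup>2"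
  shows "c ^ 4 / (3 + 18 * c\<^sup>2) \<le> (\<Sum>\<^sub>\<infinity>(i, j). (cmod (l (i, j) - l (i, j + 1)))\<^sup>2)"
proof -
  let ?D = "\<Sum>\<^sub>\<infinity>(i, j). (cmod (l (i, j) - l (i, j + 1)))\<^sup>2"
  have "2 * c\<^sup>2 \<le> ?D / c\<^sup>2 + c\<^sup>2 * (\<Sum>\<^sub>\<infinity>p. (cmod (l p))\<^sup>2)"
    using infsum_column_norm_sq_le[OF _ assms(3), of "2 / c\<^sup>2"] assms(1,5) by simp
  also have "\<dots> \<le> ?D / c\<^sup>2 + c\<^sup>2"
    using assms(4) by (simp add: mult_left_le)
  finally have "c ^ 4 \<le> ?D"
    using assms(1) by (simp add: field_simps power2_eq_square power4_eq_xxxx)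
  moreover have "c ^ 4 / (3 + 18 * c\<^sup>2) \<le> c ^ 4"
  proof (rule mult_imp_div_pos_le)
    show "0 < 3 + 18 * c\<^sup>2" by (simp add: add_pos_nonneg)
    have "1 \<le> 3 + 18 * c\<^sup>2" by (simp add: add_increasing)
    from mult_left_mono[OF this, of "c ^ 4"] show "c ^ 4 \<le> c ^ 4 * (3 + 18 * c\<^sup>2)" by simp
  qed
  ultimately show ?thesis by linarith
qed

end
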